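(* Let $n\ge 3$ and $d=\lfloor n/2\rfloor$. Let $x\in Gr^{>0}(2,n)$ be a minimizer of $E$ on $Gr^{>0}(2,n)$, and let $X$ be a spanning matrix of $x$ with all $\Delta_{i,j}(X)>0$ ($i<j$), scaled so that $D_1=\sin(\pi/n)$. Then: (1) $D_k=s_k$ for all $k\in\{1,\dots,n-1\}$; (2) $s_1\le \Delta_{i,j}(X)\le s_d$ for all $1\le i<j\le n$; (3) $\Delta_{i,j}(X)=s_1$ for all $(i,j)\in O_1$ and $\Delta_{i,j}(X)=s_d$ for all $(i,j)\in O_d$.
   Context: For a real $2\times n$ matrix $X$ and $1\le i<j\le n$, $\Delta_{i,j}(X)$ is the determinant of the $2\times2$ submatrix of columns $i,j$. $Gr^{>0}(2,n)$ is the set of 2-dimensional subspaces of $\mathbb{R}^n$ having a spanning $2\times n$ matrix $X$ (rows spanning the subspace) with $\Delta_{i,j}(X)>0$ for all $i<j$; $E(x)=\max_{i<j}\Delta_{i,j}(X)/\min_{i<j}\Delta_{i,j}(X)$. Set $s_k=\sin(k\pi/n)$. Let $\sigma$ act on strictly increasing pairs $(i,j)$, $1\le i<j\le n$, by $\sigma(i,j)=(i+1,j+1)$ if $j<n$ and $\sigma(i,n)=(1,i+1)$. For $k\in\{1,\dots,n-1\}$ the $k$-th orbit is the multiset $O_k=\{\sigma^m(1,k+1): m=0,\dots,n-1\}$, and $D_k=\left(\prod_{m=0}^{n-1}\Delta_{\sigma^m(1,k+1)}(X)\right)^{1/n}$ is the geometric mean of the coordinates over $O_k$. *)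

theory Defs
  imports Complex_Main
begin

text \<open>A real 2 x n matrix is represented as a function X :: nat => nat => real,
  with row indices 1,2 and column indices 1..n (other entries are irrelevant).\<close>

definition minor :: "(nat \<Rightarrow> nat \<Rightarrow> real) \<Rightarrow> nat \<Rightarrow> nat \<Rightarrow> real" where
  "minor X i j = X 1 i * X 2 j - X 1 j * X 2 i"

definition pairs :: "nat \<Rightarrow> (nat \<times> nat) set" where
  "pairs n = {(i, j). 1 \<le> i \<and> i < j \<and> j \<le> n}"

definition tot_pos :: "nat \<Rightarrow> (nat \<Rightarrow> nat \<Rightarrow> real) \<Rightarrow> bool" where
  "tot_pos n X \<longleftrightarrow> (\<forall>(i, j) \<in> pairs n. minor X i j > 0)"

definition Eratio :: "nat \<Rightarrow> (nat \<Rightarrow> nat \<Rightarrow> real) \<Rightarrow> real" where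
  "Eratio n X = Max ((\<lambda>(i, j). minor X i j) ` pairs n) / Min ((\<lambda>(i, j). minor X i j) ` pairs n)"

definition sigma :: "nat \<Rightarrow> nat \<times> nat \<Rightarrow> nat \<times> nat" where
  "sigma n p = (if snd p < n then (fst p + 1, snd p + 1) else (1, fst p + 1))"

definition Dk :: "nat \<Rightarrow> (nat \<Rightarrow> nat \<Rightarrow> real) \<Rightarrow> nat \<Rightarrow> real" where
  "Dk n X k = root n (\<Prod>m<n. case_prod (minor X) ((sigma n ^^ m) (1, k + 1)))"

definition sk :: "nat \<Rightarrow> nat \<Rightarrow> real" where
  "sk n k = sin (real k * pi / real n)"

end

theory Submission
  imports Defs "HOL-Analysis.Convex"
begin

(* Continue the columns antiperiodically, v_(j+n) = -v_j, so that every window of n consecutive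
   columns is totally positive and the orbit O_k becomes the set of minors (i, i+k).  Multiplying
   the three-term Pluecker relation for the columns i < i+1 < i+k < i+k+1 over a period and using
   superadditivity of the geometric mean gives D_k^2 >= D_1^2 + D_(k-1) D_(k+1), which the sines
   s_k satisfy with equality; moreover D_(n-k) = D_k.  A minimum principle for D_k / s_k then
   yields D_k >= s_k when D_1 = s_1.  The regular polygon has E = s_d / s_1, while for any X
   the maximal coordinate is at least D_d >= s_d and the minimal one at most D_1 = s_1; so a
   minimizer has extreme coordinates exactly s_d and s_1.  Then D_d = s_d, and the inequality
   run downwards from d forces D_k = s_k.  Finally, an orbit whose geometric mean equals the
   minimal (maximal) coordinate is constant. *)

lemma prod_lessThan_shift_periodic:
  fixes g :: "nat \<Rightarrow> 'a::comm_monoid_mult"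
  assumes periodic: "\<And>i. g (i + n) = g i"
  shows "(\<Prod>m<n. g (m + j)) = (\<Prod>m<n. g m)"
proof (induction j)
  case (Suc j)
  have "(\<Prod>m<n. g (m + Suc j)) = (\<Prod>m<n. g (m + j))"
  proof (cases n)
    case (Suc n')
    have "(\<Prod>m<n. g (m + Suc j)) = (\<Prod>m<n'. g (Suc m + j)) * g (j + n)"
      using Suc by (simp add: add.commute)
    also have "\<dots> = g (0 + j) * (\<Prod>m<n'. g (Suc m + j))"
      using periodic[of j] by (simp add: mult.commute)
    also have "\<dots> = (\<Prod>m<n. g (m + j))"
      using Suc prod.lessThan_Suc_shift[of "\<lambda>m. g (m + j)" n'] by simp
    finally show ?thesis .
  qed simp
  with Suc.IH show ?case by simp
qed simp

lemma prod_eq_power_imp_eq_lower_bound: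
  fixes f :: "'a \<Rightarrow> 'b::linordered_semidom"
  assumes "finite A" "i \<in> A" "0 < c" "\<And>j. j \<in> A \<Longrightarrow> c \<le> f j"
    and "prod f A = c ^ card A"
  shows "f i = c"
proof (rule ccontr)
  assume "f i \<noteq> c"
  with assms have "(\<Prod>j\<in>A. c) < prod f A"
    by (intro prod_mono_strict[of i]) (auto intro: le_neq_trans less_le_trans)
  with assms(5) show False by simp
qed

lemma prod_eq_power_imp_eq_upper_bound:
  fixes f :: "'a \<Rightarrow> 'b::linordered_semidom"
  assumes "finite A" "i \<in> A" "\<And>j. j \<in> A \<Longrightarrow> 0 < f j" "\<And>j. j \<in> A \<Longrightarrow> f j \<le> c"
    and "prod f A = c ^ card A"
  shows "f i = c"
proof (rule ccontr)
  assume "f i \<noteq> c"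
  with assms have "prod f A < (\<Prod>j\<in>A. c)"
    by (intro prod_mono_strict[of i]) (auto intro: le_neq_trans less_le_trans less_imp_le)
  with assms(5) show False by simp
qed

lemma root_prod_add_ge:
  fixes x y :: "nat \<Rightarrow> real"
  assumes n: "0 < n" and x: "\<And>i. i < n \<Longrightarrow> 0 < x i" and y: "\<And>i. i < n \<Longrightarrow> 0 < y i"
  shows "root n (\<Prod>i<n. x i) + root n (\<Prod>i<n. y i) \<le> root n (\<Prod>i<n. x i + y i)"
proof -
  define C where "C = (\<Prod>i<n. x i + y i)"
  have C: "0 < root n C"
    unfolding C_def using n x y by (intro real_root_gt_zero prod_pos add_pos_pos) auto
  have amgm: "root n (\<Prod>i<n. f i) \<le> (\<Sum>i<n. f i / n)"
    if "\<And>i. i < n \<Longrightarrow> 0 \<le> f i" for f :: "nat \<Rightarrow> real"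
  proof -
    have "0 \<le> prod f {..<n}" using that by (intro prod_nonneg) simp
    then show ?thesis
      using n that arith_geom_mean[of "{..<n}" f] by (simp add: root_powr_inverse lessThan_empty_iff)
  qed
  \<comment> \<open>AM-GM for the normalised weights x i / (x i + y i) and y i / (x i + y i), whose sum is 1\<close>
  have "root n (\<Prod>i<n. x i / (x i + y i)) + root n (\<Prod>i<n. y i / (x i + y i))
      \<le> (\<Sum>i<n. x i / (x i + y i) / n) + (\<Sum>i<n. y i / (x i + y i) / n)"
    using x y by (intro add_mono amgm) (simp_all add: add_pos_pos less_imp_le)
  also have "\<dots> = (\<Sum>i<n. 1 / real n)"
    unfolding sum.distrib[symmetric] using x y
    by (intro sum.cong refl) (simp add: add_divide_distrib[symmetric] add_pos_pos less_imp_neq[symmetric])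
  also have "\<dots> = 1" using n by simp
  finally have "root n (\<Prod>i<n. x i) / root n C + root n (\<Prod>i<n. y i) / root n C \<le> 1"
    by (simp add: C_def prod_dividef real_root_divide)
  with C show ?thesis
    by (simp add: C_def add_divide_distrib[symmetric] divide_le_eq)
qed

lemma minor_antisym: "minor X j i = - minor X i j"
  by (simp add: minor_def)

lemma minor_pluecker:
  "minor X a c * minor X b d = minor X a b * minor X c d + minor X a d * minor X b c"
  by (simp add: minor_def algebra_simps)

definition antiperiodic_lift :: "nat \<Rightarrow> (nat \<Rightarrow> nat \<Rightarrow> real) \<Rightarrow> nat \<Rightarrow> nat \<Rightarrow> real" where
  "antiperiodic_lift n X r j = (-1) ^ (j div n) * X r (j mod n + 1)"

lemma minor_antiperiodic_lift:
  "minor (antiperiodic_lift n X) a b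
    = (-1) ^ (a div n) * (-1) ^ (b div n) * minor X (a mod n + 1) (b mod n + 1)"
  by (simp add: antiperiodic_lift_def minor_def algebra_simps)

lemma minor_antiperiodic_lift_add_period:
  assumes "0 < n"
  shows "minor (antiperiodic_lift n X) a (b + n) = - minor (antiperiodic_lift n X) a b"
    and "minor (antiperiodic_lift n X) (a + n) (b + n) = minor (antiperiodic_lift n X) a b"
  using assms by (simp_all add: minor_antiperiodic_lift)

lemma minor_antiperiodic_lift_pos:
  assumes X: "tot_pos n X" and "a < b" "b < a + n"
  shows "0 < minor (antiperiodic_lift n X) a b"
proof -
  define r t where "r = a mod n" and "t = b - a"
  have n: "0 < n" and t: "0 < t" "t < n" and r: "r < n"
    using assms by (auto simp: r_def t_def)
  have b: "b = (r + t) + n * (a div n)"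
    using \<open>a < b\<close> by (simp add: r_def t_def)
  show ?thesis
  proof (cases "r + t < n")
    case True
    then have "b div n = a div n" "b mod n = r + t"
      using b by simp_all
    moreover have "0 < minor X (r + 1) (r + t + 1)"
      using X True t unfolding tot_pos_def pairs_def by auto
    ultimately show ?thesis by (simp add: minor_antiperiodic_lift r_def)
  next
    case False
    then have "b = (r + t - n) + n * Suc (a div n)" "r + t - n < n"
      using b r t by simp_all
    then have "b div n = Suc (a div n)" "b mod n = r + t - n"
      by (simp_all del: mult_Suc_right)
    moreover have "0 < minor X (r + t - n + 1) (r + 1)"
      using X False t r unfolding tot_pos_def pairs_def by auto
    ultimately show ?thesis
      by (simp add: minor_antiperiodic_lift r_def minor_antisym[of X "Suc (a mod n)"])
  qed
qed

lemma sigma_pow_orbit: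
  assumes "1 \<le> k" "k < n" "m < n"
  shows "(sigma n ^^ m) (1, k + 1)
    = (if m + k < n then (m + 1, m + k + 1) else (m + k + 1 - n, m + 1))"
  using assms(3)
proof (induction m)
  case (Suc m)
  then show ?case using assms by (auto simp: sigma_def)
qed (use assms in simp)

lemma sigma_pow_orbit_in_pairs:
  assumes "1 \<le> k" "k < n" "m < n"
  shows "(sigma n ^^ m) (1, k + 1) \<in> pairs n"
  unfolding sigma_pow_orbit[OF assms] using assms by (auto simp: pairs_def)

lemma minor_sigma_pow_orbit:
  assumes "1 \<le> k" "k < n" "m < n"
  shows "case_prod (minor X) ((sigma n ^^ m) (1, k + 1)) = minor (antiperiodic_lift n X) m (m + k)"
proof (cases "m + k < n")
  case True
  then show ?thesis
    unfolding sigma_pow_orbit[OF assms] by (simp add: minor_antiperiodic_lift)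
next
  case False
  then have "(m + k) div n = 1" "(m + k) mod n = m + k - n"
    using assms by (simp_all add: le_div_geq le_mod_geq)
  with False assms show ?thesis
    unfolding sigma_pow_orbit[OF assms]
    by (simp add: minor_antiperiodic_lift minor_antisym[of X "Suc (m + k - n)"] Suc_diff_le)
qed

lemma minor_sigma_pow_orbit_pos:
  assumes "tot_pos n X" "1 \<le> k" "k < n" "m < n"
  shows "0 < case_prod (minor X) ((sigma n ^^ m) (1, k + 1))"
  using assms sigma_pow_orbit_in_pairs[of k n m] unfolding tot_pos_def by auto

lemma prod_sigma_pow_orbit_eq_Dk_power:
  assumes "tot_pos n X" "1 \<le> k" "k < n"
  shows "(\<Prod>m<n. case_prod (minor X) ((sigma n ^^ m) (1, k + 1))) = Dk n X k ^ n"
proof -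
  have "0 \<le> (\<Prod>m<n. case_prod (minor X) ((sigma n ^^ m) (1, k + 1)))"
    using minor_sigma_pow_orbit_pos[OF assms] by (intro prod_nonneg) (simp add: less_imp_le)
  with assms show ?thesis by (simp add: Dk_def)
qed

lemma Dk_pos:
  assumes "tot_pos n X" "1 \<le> k" "k < n"
  shows "0 < Dk n X k"
  using assms minor_sigma_pow_orbit_pos[OF assms] unfolding Dk_def
  by (intro real_root_gt_zero prod_pos) auto

lemma Dk_eq_root_prod_lift:
  assumes "1 \<le> k" "k < n"
  shows "Dk n X k = root n (\<Prod>m<n. minor (antiperiodic_lift n X) m (m + k))"
  unfolding Dk_def using minor_sigma_pow_orbit[OF assms] by simp

lemma prod_minor_antiperiodic_lift_shift:
  assumes "0 < n"
  shows "(\<Prod>m<n. minor (antiperiodic_lift n X) (m + j) (m + j + k))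
    = (\<Prod>m<n. minor (antiperiodic_lift n X) m (m + k))"
proof -
  have "minor (antiperiodic_lift n X) (i + n) (i + n + k) = minor (antiperiodic_lift n X) i (i + k)"
    for i
    using minor_antiperiodic_lift_add_period(2)[OF assms, of X i "i + k"] by (simp add: ac_simps)
  from prod_lessThan_shift_periodic[of "\<lambda>i. minor (antiperiodic_lift n X) i (i + k)", OF this]
  show ?thesis .
qed

lemma Dk_complement:
  assumes "1 \<le> k" "k < n"
  shows "Dk n X (n - k) = Dk n X k"
proof -
  let ?L = "antiperiodic_lift n X"
  have n: "0 < n" using assms by simp
  have "minor ?L m (m + (n - k)) = minor ?L (m + (n - k)) (m + (n - k) + k)" for m
    using assms minor_antiperiodic_lift_add_period(1)[OF n, of X "m + (n - k)" m]
    by (simp add: minor_antisym[of ?L m])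
  then have "(\<Prod>m<n. minor ?L m (m + (n - k))) = (\<Prod>m<n. minor ?L m (m + k))"
    using prod_minor_antiperiodic_lift_shift[OF n] by simp
  with assms show ?thesis by (simp add: Dk_eq_root_prod_lift)
qed

lemma Dk_pluecker_ineq:
  assumes X: "tot_pos n X" and k: "2 \<le> k" "k + 2 \<le> n"
  shows "Dk n X 1 ^ 2 + Dk n X (k - 1) * Dk n X (k + 1) \<le> Dk n X k ^ 2"
proof -
  let ?P = "minor (antiperiodic_lift n X)"
  have n: "0 < n" using k by simp
  have shift: "(\<Prod>m<n. ?P (m + j) (m + j + l)) = (\<Prod>m<n. ?P m (m + l))" for j l
    by (rule prod_minor_antiperiodic_lift_shift[OF n])
  define x where "x i = ?P i (i + 1) * ?P (i + k) (i + k + 1)" for i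
  define y where "y i = ?P i (i + k + 1) * ?P (i + 1) (i + k)" for i
  have pluecker: "?P i (i + k) * ?P (i + 1) (i + k + 1) = x i + y i" for i
    unfolding x_def y_def by (rule minor_pluecker)
  have x: "0 < x i" and y: "0 < y i" for i
    unfolding x_def y_def using k by (auto intro!: mult_pos_pos minor_antiperiodic_lift_pos[OF X])
  have "(\<Prod>i<n. x i) = (\<Prod>m<n. ?P m (m + 1)) * (\<Prod>m<n. ?P m (m + 1))"
    unfolding x_def prod.distrib using shift[of 0 1] shift[of k 1] by simp
  moreover have "(\<Prod>i<n. y i) = (\<Prod>m<n. ?P m (m + (k + 1))) * (\<Prod>m<n. ?P m (m + (k - 1)))"
    unfolding y_def prod.distrib using shift[of 0 "k + 1"] shift[of 1 "k - 1"] k by simp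
  moreover have "(\<Prod>i<n. x i + y i) = (\<Prod>m<n. ?P m (m + k)) * (\<Prod>m<n. ?P m (m + k))"
    unfolding pluecker[symmetric] prod.distrib using shift[of 0 k] shift[of 1 k] by simp
  moreover have "root n (\<Prod>i<n. x i) + root n (\<Prod>i<n. y i) \<le> root n (\<Prod>i<n. x i + y i)"
    using root_prod_add_ge[OF n] x y by simp
  ultimately show ?thesis
    using k by (simp add: Dk_eq_root_prod_lift real_root_mult power2_eq_square mult.commute)
qed

definition pluecker_coords :: "nat \<Rightarrow> (nat \<Rightarrow> nat \<Rightarrow> real) \<Rightarrow> real set" where
  "pluecker_coords n X = (\<lambda>(i, j). minor X i j) ` pairs n"

lemma Eratio_eq_Max_div_Min: "Eratio n X = Max (pluecker_coords n X) / Min (pluecker_coords n X)"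
  by (simp add: Eratio_def pluecker_coords_def)

lemma finite_pluecker_coords: "finite (pluecker_coords n X)"
proof -
  have "finite (pairs n)"
    by (rule finite_subset[of _ "{..n} \<times> {..n}"]) (auto simp: pairs_def)
  then show ?thesis unfolding pluecker_coords_def by simp
qed

lemma minor_in_pluecker_coords:
  "1 \<le> i \<Longrightarrow> i < j \<Longrightarrow> j \<le> n \<Longrightarrow> minor X i j \<in> pluecker_coords n X"
  unfolding pluecker_coords_def pairs_def by force

lemma sigma_pow_orbit_in_pluecker_coords:
  assumes "1 \<le> k" "k < n" "m < n"
  shows "case_prod (minor X) ((sigma n ^^ m) (1, k + 1)) \<in> pluecker_coords n X"
  unfolding pluecker_coords_def using sigma_pow_orbit_in_pairs[OF assms] by force

lemma Min_pluecker_coords_pos: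
  assumes "tot_pos n X" "2 \<le> n"
  shows "0 < Min (pluecker_coords n X)"
proof -
  have "pluecker_coords n X \<noteq> {}"
    using minor_in_pluecker_coords[of 1 2 n X] assms by auto
  with assms show ?thesis
    using finite_pluecker_coords unfolding tot_pos_def pluecker_coords_def by auto
qed

lemma Dk_between_Min_Max:
  assumes X: "tot_pos n X" and k: "1 \<le> k" "k < n"
  shows "Min (pluecker_coords n X) \<le> Dk n X k \<and> Dk n X k \<le> Max (pluecker_coords n X)"
proof -
  let ?C = "pluecker_coords n X" and ?f = "\<lambda>m. case_prod (minor X) ((sigma n ^^ m) (1, k + 1))"
  have n: "0 < n" using k by simp
  have f: "Min ?C \<le> ?f m \<and> ?f m \<le> Max ?C" if "m < n" for m
    using sigma_pow_orbit_in_pluecker_coords[OF k that] finite_pluecker_coords by simp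
  have Min: "0 < Min ?C" using Min_pluecker_coords_pos[OF X] k by simp
  have "(\<Prod>m<n. Min ?C) \<le> (\<Prod>m<n. ?f m)"
    using f Min by (intro prod_mono) (auto intro: less_imp_le)
  moreover have "(\<Prod>m<n. ?f m) \<le> (\<Prod>m<n. Max ?C)"
    using f minor_sigma_pow_orbit_pos[OF assms] by (intro prod_mono) (auto intro: less_imp_le)
  ultimately have "Min ?C ^ n \<le> Dk n X k ^ n" "Dk n X k ^ n \<le> Max ?C ^ n"
    using prod_sigma_pow_orbit_eq_Dk_power[OF assms] by simp_all
  moreover have "0 \<le> Max ?C" using f[of 0] Min n by simp
  ultimately show ?thesis
    using Min n Dk_pos[OF assms] by (simp add: power_mono_iff)
qed

lemma sin_diff_mult_sin_add: "sin (a - b) * sin (a + b) = sin a ^ 2 - sin (b :: real) ^ 2"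
proof -
  have "sin (a - b) * sin (a + b) = (sin a * cos b) ^ 2 - (cos a * sin b) ^ 2"
    by (simp add: sin_diff sin_add power2_eq_square algebra_simps)
  also have "\<dots> = sin a ^ 2 - sin b ^ 2"
    by (simp add: power_mult_distrib cos_squared_eq algebra_simps)
  finally show ?thesis .
qed

lemma sk_square_eq:
  assumes "1 \<le> k"
  shows "sk n k ^ 2 = sk n 1 ^ 2 + sk n (k - 1) * sk n (k + 1)"
proof -
  have "real (k - 1) * pi / n = real k * pi / n - pi / n"
    "real (k + 1) * pi / n = real k * pi / n + pi / n"
    using assms by (simp_all add: of_nat_diff add_divide_distrib diff_divide_distrib algebra_simps)
  then show ?thesis
    using sin_diff_mult_sin_add[of "real k * pi / n" "pi / n"] by (simp add: sk_def)
qed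

lemma sk_pos:
  assumes "1 \<le> k" "k < n"
  shows "0 < sk n k"
  unfolding sk_def using assms by (intro sin_gt_zero) (simp_all add: field_simps)

lemma sk_complement:
  assumes "k \<le> n"
  shows "sk n (n - k) = sk n k"
proof (cases "n = 0")
  case False
  with assms have "real (n - k) * pi / n = pi - real k * pi / n"
    by (simp add: of_nat_diff field_simps)
  then show ?thesis by (simp add: sk_def)
qed (use assms in simp)

lemma sk_mono:
  assumes "j \<le> k" "2 * k \<le> n"
  shows "sk n j \<le> sk n k"
proof (cases "n = 0")
  case False
  then have "real k * pi / n \<le> pi / 2"
    using assms by (simp add: field_simps)
  with assms False show ?thesis
    unfolding sk_def by (intro sin_monotone_2pi_le) (simp_all add: divide_right_mono order_trans[of _ 0])
qed (use assms in simp)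

lemma sk_between:
  assumes "1 \<le> k" "k < n"
  shows "sk n 1 \<le> sk n k \<and> sk n k \<le> sk n (n div 2)"
proof -
  define k' where "k' = min k (n - k)"
  have "sk n k' = sk n k"
    unfolding k'_def using sk_complement[of k n] assms by (simp add: min_def)
  moreover have "1 \<le> k'" "k' \<le> n div 2" "2 * (n div 2) \<le> n"
    unfolding k'_def using assms by auto
  ultimately show ?thesis
    using sk_mono[of 1 k' n] sk_mono[of k' "n div 2" n] by simp
qed

definition regular_polygon :: "nat \<Rightarrow> nat \<Rightarrow> nat \<Rightarrow> real" where
  "regular_polygon n r j = (if r = 1 then cos (real j * pi / n) else sin (real j * pi / n))"

lemma minor_regular_polygon:
  assumes "i < j"
  shows "minor (regular_polygon n) i j = sk n (j - i)"
proof -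
  have "minor (regular_polygon n) i j = sin (real j * pi / n - real i * pi / n)"
    unfolding minor_def regular_polygon_def by (simp add: sin_diff algebra_simps)
  also have "real j * pi / n - real i * pi / n = real (j - i) * pi / n"
    using assms by (simp add: of_nat_diff diff_divide_distrib left_diff_distrib)
  finally show ?thesis unfolding sk_def .
qed

lemma tot_pos_regular_polygon: "tot_pos n (regular_polygon n)"
  unfolding tot_pos_def pairs_def by (auto simp: minor_regular_polygon sk_pos)

lemma Eratio_regular_polygon:
  assumes "2 \<le> n"
  shows "Eratio n (regular_polygon n) = sk n (n div 2) / sk n 1"
proof -
  let ?C = "pluecker_coords n (regular_polygon n)"
  have between: "sk n 1 \<le> v \<and> v \<le> sk n (n div 2)" if "v \<in> ?C" for v
  proof -
    from that obtain i j where "1 \<le> i" "i < j" "j \<le> n" "v = sk n (j - i)"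
      unfolding pluecker_coords_def pairs_def by (auto simp: minor_regular_polygon)
    then show ?thesis using sk_between[of "j - i" n] by simp
  qed
  have "sk n 1 \<in> ?C" "sk n (n div 2) \<in> ?C"
    using minor_in_pluecker_coords[of 1 2 n "regular_polygon n"]
      minor_in_pluecker_coords[of 1 "n div 2 + 1" n "regular_polygon n"] assms
    by (simp_all add: minor_regular_polygon)
  with between have "Max ?C = sk n (n div 2)" "Min ?C = sk n 1"
    by (auto intro: Max_eqI Min_eqI finite_pluecker_coords)
  then show ?thesis unfolding Eratio_eq_Max_div_Min by simp
qed

locale pluecker_supersolution =
  fixes n :: nat and s D :: "nat \<Rightarrow> real"
  assumes s_pos: "\<And>k. 1 \<le> k \<Longrightarrow> k < n \<Longrightarrow> 0 < s k"
    and D_pos: "\<And>k. 1 \<le> k \<Longrightarrow> k < n \<Longrightarrow> 0 < D k"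
    and D_first: "D 1 = s 1"
    and D_last: "D (n - 1) = s (n - 1)"
    and s_eq: "\<And>k. 2 \<le> k \<Longrightarrow> k + 2 \<le> n \<Longrightarrow> s k ^ 2 = s 1 ^ 2 + s (k - 1) * s (k + 1)"
    and D_ineq: "\<And>k. 2 \<le> k \<Longrightarrow> k + 2 \<le> n \<Longrightarrow> D 1 ^ 2 + D (k - 1) * D (k + 1) \<le> D k ^ 2"
begin

lemma s_le_D:
  assumes k: "1 \<le> k" "k < n"
  shows "s k \<le> D k"
proof -
  define f where "f j = D j / s j" for j
  obtain k0 where k0: "1 \<le> k0" "k0 < n" and min: "\<And>j. 1 \<le> j \<Longrightarrow> j < n \<Longrightarrow> f k0 \<le> f j"
    using ex_is_arg_min_if_finite[of "{1..<n}" f] k unfolding is_arg_min_def by force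
  \<comment> \<open>minimum principle: at a minimum \<open>\<mu> < 1\<close> of \<open>D / s\<close> the recurrence would force \<open>\<mu>\<^sup>2 \<ge> 1\<close>\<close>
  have "1 \<le> f k0"
  proof (rule ccontr)
    assume "\<not> 1 \<le> f k0"
    define \<mu> where "\<mu> = f k0"
    have \<mu>: "0 < \<mu>" "\<mu> < 1"
      using \<open>\<not> 1 \<le> f k0\<close> D_pos[OF k0] s_pos[OF k0] by (simp_all add: \<mu>_def f_def)
    have "0 < s 1" "0 < s (n - 1)" using k by (auto intro: s_pos)
    then have "f 1 = 1" "f (n - 1) = 1" using D_first D_last by (simp_all add: f_def)
    then have "k0 \<noteq> 1" "k0 \<noteq> n - 1"
      using \<mu> unfolding \<mu>_def by auto
    with k0 have k0': "2 \<le> k0" "k0 + 2 \<le> n" by auto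
    have pos: "0 < s (k0 - 1)" "0 < s (k0 + 1)" "0 < D (k0 - 1)"
      using k0' by (auto intro: s_pos D_pos)
    have neighbours: "\<mu> * s (k0 - 1) \<le> D (k0 - 1)" "\<mu> * s (k0 + 1) \<le> D (k0 + 1)"
      using min[of "k0 - 1"] min[of "k0 + 1"] pos k0' unfolding \<mu>_def f_def
      by (simp_all add: pos_le_divide_eq)
    have "D k0 = \<mu> * s k0" using s_pos[OF k0] by (simp add: \<mu>_def f_def)
    have "s 1 ^ 2 + \<mu> ^ 2 * (s (k0 - 1) * s (k0 + 1))
        = D 1 ^ 2 + (\<mu> * s (k0 - 1)) * (\<mu> * s (k0 + 1))"
      unfolding D_first by (simp add: power2_eq_square algebra_simps)
    also have "\<dots> \<le> D 1 ^ 2 + D (k0 - 1) * D (k0 + 1)"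
      using neighbours \<mu> pos by (intro add_left_mono mult_mono) auto
    also have "\<dots> \<le> D k0 ^ 2" by (rule D_ineq[OF k0'])
    also have "\<dots> = \<mu> ^ 2 * (s 1 ^ 2 + s (k0 - 1) * s (k0 + 1))"
      using \<open>D k0 = \<mu> * s k0\<close> s_eq[OF k0'] by (simp add: power_mult_distrib)
    finally have "s 1 ^ 2 \<le> \<mu> ^ 2 * s 1 ^ 2" by (simp add: algebra_simps)
    moreover have "\<mu> ^ 2 < 1" using \<mu> by (simp add: power_less_one_iff)
    moreover have "0 < s 1 ^ 2" using s_pos[of 1] k by simp
    ultimately show False by simp
  qed
  with min[OF k] have "1 \<le> f k" by linarith
  then show ?thesis using s_pos[OF k] by (simp add: f_def le_divide_eq)
qed

lemma D_eq_s_below: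
  assumes "D d = s d" "2 * d \<le> n" and k: "1 \<le> k" "k \<le> d"
  shows "D k = s k"
  using k(2)
proof (induction k rule: inc_induct)
  case (step m)
  then have m: "1 \<le> m" "2 \<le> Suc m" "Suc m + 2 \<le> n" using k assms(2) by auto
  have "D m * s (m + 2) \<le> D m * D (m + 2)"
    using s_le_D[of "m + 2"] D_pos[of m] m by (intro mult_left_mono) auto
  also have "\<dots> \<le> s m * s (m + 2)"
    using D_ineq[OF m(2,3)] s_eq[OF m(2,3)] step.IH D_first by simp
  finally have "D m \<le> s m"
    using s_pos[of "m + 2"] m by (simp add: mult_le_cancel_right_pos)
  with s_le_D[of m] m show ?case by simp
qed (rule assms(1))

end

lemma pluecker_supersolution_Dk:
  assumes "2 \<le> n" "tot_pos n X" "Dk n X 1 = sk n 1"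
  shows "pluecker_supersolution n (sk n) (Dk n X)"
proof
  show "Dk n X (n - 1) = sk n (n - 1)"
    using assms Dk_complement[of 1 n X] sk_complement[of 1 n] by simp
  show "sk n k ^ 2 = sk n 1 ^ 2 + sk n (k - 1) * sk n (k + 1)" if "2 \<le> k" for k
    using that by (intro sk_square_eq) simp
  show "Dk n X 1 ^ 2 + Dk n X (k - 1) * Dk n X (k + 1) \<le> Dk n X k ^ 2"
    if "2 \<le> k" "k + 2 \<le> n" for k
    using Dk_pluecker_ineq[OF assms(2) that] .
qed (use assms in \<open>auto simp: sk_pos Dk_pos\<close>)

lemma minor_sigma_pow_orbit_eq_Min_if_Dk_eq_Min:
  assumes X: "tot_pos n X" and k: "1 \<le> k" "k < n" and "m < n"
    and "Dk n X k = Min (pluecker_coords n X)"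
  shows "case_prod (minor X) ((sigma n ^^ m) (1, k + 1)) = Min (pluecker_coords n X)"
proof (rule prod_eq_power_imp_eq_lower_bound
    [where A = "{..<n}" and i = m and f = "\<lambda>j. case_prod (minor X) ((sigma n ^^ j) (1, k + 1))"])
  show "0 < Min (pluecker_coords n X)" using Min_pluecker_coords_pos[OF X] k by simp
  show "Min (pluecker_coords n X) \<le> case_prod (minor X) ((sigma n ^^ j) (1, k + 1))"
    if "j \<in> {..<n}" for j
    using sigma_pow_orbit_in_pluecker_coords[OF k] that finite_pluecker_coords by simp
  show "(\<Prod>j\<in>{..<n}. case_prod (minor X) ((sigma n ^^ j) (1, k + 1)))
      = Min (pluecker_coords n X) ^ card {..<n}"
    using prod_sigma_pow_orbit_eq_Dk_power[OF X k] assms(5) by simp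
qed (use \<open>m < n\<close> in simp_all)

lemma minor_sigma_pow_orbit_eq_Max_if_Dk_eq_Max:
  assumes X: "tot_pos n X" and k: "1 \<le> k" "k < n" and "m < n"
    and "Dk n X k = Max (pluecker_coords n X)"
  shows "case_prod (minor X) ((sigma n ^^ m) (1, k + 1)) = Max (pluecker_coords n X)"
proof (rule prod_eq_power_imp_eq_upper_bound
    [where A = "{..<n}" and i = m and f = "\<lambda>j. case_prod (minor X) ((sigma n ^^ j) (1, k + 1))"])
  show "0 < case_prod (minor X) ((sigma n ^^ j) (1, k + 1))" if "j \<in> {..<n}" for j
    using minor_sigma_pow_orbit_pos[OF X k] that by simp
  show "case_prod (minor X) ((sigma n ^^ j) (1, k + 1)) \<le> Max (pluecker_coords n X)"
    if "j \<in> {..<n}" for j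
    using sigma_pow_orbit_in_pluecker_coords[OF k] that finite_pluecker_coords by simp
  show "(\<Prod>j\<in>{..<n}. case_prod (minor X) ((sigma n ^^ j) (1, k + 1)))
      = Max (pluecker_coords n X) ^ card {..<n}"
    using prod_sigma_pow_orbit_eq_Dk_power[OF X k] assms(5) by simp
qed (use \<open>m < n\<close> in simp_all)

context
  fixes n :: nat and X :: "nat \<Rightarrow> nat \<Rightarrow> real"
  assumes n: "2 \<le> n" and X: "tot_pos n X"
    and minimizer: "\<forall>Y. tot_pos n Y \<longrightarrow> Eratio n X \<le> Eratio n Y"
    and scale: "Dk n X 1 = sk n 1"
begin

interpretation pluecker_supersolution n "sk n" "Dk n X"
  using pluecker_supersolution_Dk[OF n X scale] .

lemma minimizer_Max_Min:
  "Max (pluecker_coords n X) = sk n (n div 2) \<and> Min (pluecker_coords n X) = sk n 1"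
proof -
  define M m s1 sd where "M = Max (pluecker_coords n X)" and "m = Min (pluecker_coords n X)"
    and "s1 = sk n 1" and "sd = sk n (n div 2)"
  have d: "1 \<le> n div 2" "n div 2 < n" using n by auto
  have pos: "0 < m" "0 < s1" "0 < sd"
    using Min_pluecker_coords_pos[OF X n] sk_pos[of 1 n] sk_pos[OF d] n
    by (simp_all add: m_def s1_def sd_def)
  have "m \<le> s1" using Dk_between_Min_Max[OF X, of 1] n scale by (simp add: m_def s1_def)
  have "sd \<le> M"
    using s_le_D[OF d] Dk_between_Min_Max[OF X d] by (simp add: M_def sd_def)
  have "Eratio n X \<le> Eratio n (regular_polygon n)"
    using minimizer tot_pos_regular_polygon by blast
  then have "M / m \<le> sd / s1"
    by (simp add: Eratio_regular_polygon[OF n] Eratio_eq_Max_div_Min[of n X] M_def m_def sd_def s1_def)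
  with pos have ratio: "M * s1 \<le> sd * m" by (simp add: field_simps)
  also have "\<dots> \<le> sd * s1" using \<open>m \<le> s1\<close> pos by simp
  finally have "M = sd" using \<open>sd \<le> M\<close> pos by simp
  with ratio pos \<open>m \<le> s1\<close> have "m = s1" by simp
  with \<open>M = sd\<close> show ?thesis by (simp add: M_def m_def sd_def s1_def)
qed

lemma minimizer_Dk_eq_sk:
  assumes "1 \<le> k" "k < n"
  shows "Dk n X k = sk n k"
proof -
  have d: "1 \<le> n div 2" "n div 2 < n" using n by auto
  have "Dk n X (n div 2) = sk n (n div 2)"
    using s_le_D[OF d] Dk_between_Min_Max[OF X d] minimizer_Max_Min by simp
  then have below: "Dk n X j = sk n j" if "1 \<le> j" "j \<le> n div 2" for j
    using D_eq_s_below that by simp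
  show ?thesis
  proof (cases "k \<le> n div 2")
    case False
    then have "Dk n X (n - k) = sk n (n - k)" using below assms by simp
    then show ?thesis using assms Dk_complement[of k n X] sk_complement[of k n] by simp
  qed (use below assms in simp)
qed

end

theorem mainTheorem2:
  fixes n :: nat and X :: "nat \<Rightarrow> nat \<Rightarrow> real"
  assumes n3: "n \<ge> 3"
    and pos: "tot_pos n X"
    and minimizer: "\<forall>Y. tot_pos n Y \<longrightarrow> Eratio n X \<le> Eratio n Y"
    and scale: "Dk n X 1 = sin (pi / real n)"
  shows "(\<forall>k \<in> {1..n-1}. Dk n X k = sk n k)
    \<and> (\<forall>i j. 1 \<le> i \<and> i < j \<and> j \<le> n \<longrightarrow>
          sk n 1 \<le> minor X i j \<and> minor X i j \<le> sk n (n div 2))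
    \<and> (\<forall>m < n. case_prod (minor X) ((sigma n ^^ m) (1, 2)) = sk n 1)
    \<and> (\<forall>m < n. case_prod (minor X) ((sigma n ^^ m) (1, n div 2 + 1)) = sk n (n div 2))"
proof -
  have n: "2 \<le> n" and d: "1 \<le> n div 2" "n div 2 < n" using n3 by auto
  have scale': "Dk n X 1 = sk n 1" using scale by (simp add: sk_def)
  note Dk_eq_sk = minimizer_Dk_eq_sk[OF n pos minimizer scale']
  note extremes = minimizer_Max_Min[OF n pos minimizer scale']
  have "Dk n X 1 = Min (pluecker_coords n X)" "Dk n X (n div 2) = Max (pluecker_coords n X)"
    using Dk_eq_sk[of 1] Dk_eq_sk[OF d] extremes n by simp_all
  then have "case_prod (minor X) ((sigma n ^^ m) (1, 1 + 1)) = sk n 1"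
    and "case_prod (minor X) ((sigma n ^^ m) (1, n div 2 + 1)) = sk n (n div 2)" if "m < n" for m
    using minor_sigma_pow_orbit_eq_Min_if_Dk_eq_Min[OF pos _ _ that]
      minor_sigma_pow_orbit_eq_Max_if_Dk_eq_Max[OF pos d that] extremes n by simp_all
  moreover have "sk n 1 \<le> minor X i j \<and> minor X i j \<le> sk n (n div 2)"
    if "1 \<le> i" "i < j" "j \<le> n" for i j
    using Min_le[OF finite_pluecker_coords minor_in_pluecker_coords[OF that, where X = X]]
      Max_ge[OF finite_pluecker_coords minor_in_pluecker_coords[OF that, where X = X]] extremes by simp
  ultimately show ?thesis using Dk_eq_sk n by (auto simp: numeral_2_eq_2)
qed

end
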